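(* Let $m>0$, $n$ an odd positive integer, $\epsilon>0$, $V=[-m/2,m/2]$. For every $\alpha\in[0,1]$, the mechanism $\mathtt{DPExpMed}_\alpha$ is $\epsilon$-differentially private.
   Context: A dataset is $D=(x_1,\dots,x_n)\in V^n$, indexed so that $x_1\le\dots\le x_n$, with median $\mathcal{T}(D)=x_{\lceil n/2\rceil}$. The percentile loss $q(D,a)$ for $a\in V$ is: $\min\{|\lceil n/2\rceil-i|: a\in[x_i,\mathcal{T}(D)]\}$ if $a\in[x_1,\mathcal{T}(D)]$; $\min\{|\lceil n/2\rceil-i|: a\in[\mathcal{T}(D),x_i]\}$ if $a\in(\mathcal{T}(D),x_n]$; and $\lceil n/2\rceil$ otherwise. The widened percentile loss is $p_\alpha(D,\ell)=\min_{a\in V:|a-\ell|\le\alpha m}q(D,a)$. $\mathtt{DPExpMed}_\alpha(D)$ is the random point of $V$ with density proportional to $\exp(-\frac{\epsilon}{2}p_\alpha(D,\ell))$, $\ell\in V$. Two datasets are neighboring if, as multisets, they differ in exactly one element. A randomized mechanism $\mathcal{M}:V^n\to V$ is $\epsilon$-differentially private if $\Pr[\mathcal{M}(D)\in S]\le e^{\epsilon}\Pr[\mathcal{M}(D')\in S]$ for all neighboring $D,D'$ and measurable $S\subseteq V$. *)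

theory Defs
  imports "HOL-Analysis.Analysis" "HOL-Library.Multiset"
begin

text \<open>Datasets are lists of reals (the order of the list is irrelevant; the
  sorted order statistics are taken via sort).  Indices are 1-based as in the paper.\<close>

definition med_idx :: "nat \<Rightarrow> nat" where
  "med_idx n = (n + 1) div 2"

definition ord_stat :: "real list \<Rightarrow> nat \<Rightarrow> real" where
  "ord_stat D i = sort D ! (i - 1)"

definition median :: "real list \<Rightarrow> real" where
  "median D = ord_stat D (med_idx (length D))"

definition idx_dist :: "nat \<Rightarrow> nat \<Rightarrow> nat" where
  "idx_dist k i = nat \<bar>int k - int i\<bar>"

definition pct_loss :: "real list \<Rightarrow> real \<Rightarrow> nat" where
  "pct_loss D a =
    (let n = length D; k = med_idx n; T = median D in
     if ord_stat D 1 \<le> a \<and> a \<le> T then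
       (LEAST d. \<exists>i\<in>{1..n}. a \<in> {ord_stat D i..T} \<and> d = idx_dist k i)
     else if T < a \<and> a \<le> ord_stat D n then
       (LEAST d. \<exists>i\<in>{1..n}. a \<in> {T..ord_stat D i} \<and> d = idx_dist k i)
     else k)"

definition dom_V :: "real \<Rightarrow> real set" where
  "dom_V m = {-m/2..m/2}"

definition wide_loss :: "real \<Rightarrow> real \<Rightarrow> real list \<Rightarrow> real \<Rightarrow> nat" where
  "wide_loss m \<alpha> D l =
     (LEAST d. \<exists>a\<in>dom_V m. \<bar>a - l\<bar> \<le> \<alpha> * m \<and> d = pct_loss D a)"

definition expmed_weight :: "real \<Rightarrow> real \<Rightarrow> real \<Rightarrow> real list \<Rightarrow> real \<Rightarrow> real" where
  "expmed_weight \<epsilon> m \<alpha> D l = exp (- (\<epsilon> / 2) * real (wide_loss m \<alpha> D l))"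

text \<open>Pr[DPExpMed_alpha(D) \<in> S]: the output has density proportional to the weight
  on V with respect to Lebesgue measure.\<close>
definition expmed_prob :: "real \<Rightarrow> real \<Rightarrow> real \<Rightarrow> real list \<Rightarrow> real set \<Rightarrow> real" where
  "expmed_prob \<epsilon> m \<alpha> D S =
     (LINT l:(S \<inter> dom_V m)|lborel. expmed_weight \<epsilon> m \<alpha> D l) /
     (LINT l:dom_V m|lborel. expmed_weight \<epsilon> m \<alpha> D l)"

definition neighboring :: "real list \<Rightarrow> real list \<Rightarrow> bool" where
  "neighboring D D' \<longleftrightarrow> length D = length D' \<and> size (mset D - mset D') = 1"

end

theory Submission
  imports Defs
begin

text \<open>For odd \<open>n = 2k - 1\<close> and \<open>d < k\<close>, the percentile loss satisfies \<open>q(D,a) \<le> d\<close> exactly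
  when \<open>x\<^sub>k\<^sub>-\<^sub>d \<le> a \<le> x\<^sub>k\<^sub>+\<^sub>d\<close>. Hence, for \<open>\<ell> \<in> V\<close> and \<open>r = \<alpha> m\<close>, the widened loss depends only on
  two counts: \<open>p\<^sub>\<alpha>(D,\<ell>) \<le> d\<close> iff \<open>k \<le> d\<close>, or at least \<open>k - d\<close> data points are \<open>\<le> \<ell> + r\<close>
  and fewer than \<open>k + d\<close> are \<open>< \<ell> - r\<close>. Replacing one data point changes each count by at
  most one, hence \<open>p\<^sub>\<alpha>\<close> by at most one, so the unnormalised densities of neighbouring
  datasets are within a factor \<open>e\<^sup>\<epsilon>\<^sup>/\<^sup>2\<close> of each other pointwise; the same then holds for
  the normalising constants, and the two factors multiply to \<open>e\<^sup>\<epsilon>\<close>.\<close>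

definition count_le :: "real list \<Rightarrow> real \<Rightarrow> nat" where
  "count_le D y = length (filter (\<lambda>x. x \<le> y) D)"

definition count_less :: "real list \<Rightarrow> real \<Rightarrow> nat" where
  "count_less D y = length (filter (\<lambda>x. x < y) D)"

lemma Least_image_le_iff:
  fixes f :: "'a \<Rightarrow> nat"
  assumes "\<exists>x\<in>A. P x"
  shows "(LEAST e. \<exists>x\<in>A. P x \<and> e = f x) \<le> d \<longleftrightarrow> (\<exists>x\<in>A. P x \<and> f x \<le> d)"
proof
  assume "(LEAST e. \<exists>x\<in>A. P x \<and> e = f x) \<le> d"
  moreover have "\<exists>x\<in>A. P x \<and> (LEAST e. \<exists>x\<in>A. P x \<and> e = f x) = f x"
    using LeastI_ex[of "\<lambda>e. \<exists>x\<in>A. P x \<and> e = f x"] assms by blast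
  ultimately show "\<exists>x\<in>A. P x \<and> f x \<le> d" by auto
next
  assume "\<exists>x\<in>A. P x \<and> f x \<le> d"
  then obtain x where "x \<in> A" "P x" "f x \<le> d" by blast
  then have "(LEAST e. \<exists>x\<in>A. P x \<and> e = f x) \<le> f x" by (intro Least_le) blast
  with \<open>f x \<le> d\<close> show "(LEAST e. \<exists>x\<in>A. P x \<and> e = f x) \<le> d" by simp
qed

lemma sorted_nth_iff_less_length_filter:
  fixes xs :: "'a::linorder list"
  assumes "sorted xs" "j < length xs" and down_closed: "\<And>u v. u \<le> v \<Longrightarrow> P v \<Longrightarrow> P u"
  shows "P (xs ! j) \<longleftrightarrow> j < length (filter P xs)"
  using assms(1,2)
proof (induction xs arbitrary: j)
  case Nil
  then show ?case by simp
next
  case (Cons x xs)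
  show ?case
  proof (cases "P x")
    case True
    then show ?thesis using Cons by (cases j) auto
  next
    case False
    then have "\<forall>y\<in>set (x # xs). \<not> P y" using Cons.prems down_closed by auto
    moreover have "(x # xs) ! j \<in> set (x # xs)" using Cons.prems(2) by (rule nth_mem)
    ultimately have "\<not> P ((x # xs) ! j)" by blast
    with \<open>\<forall>y\<in>set (x # xs). \<not> P y\<close> show ?thesis by (simp add: filter_empty_conv)
  qed
qed

lemma ord_stat_le_iff:
  assumes "1 \<le> j" "j \<le> length D"
  shows "ord_stat D j \<le> a \<longleftrightarrow> j \<le> count_le D a"
  using sorted_nth_iff_less_length_filter[of "sort D" "j - 1" "\<lambda>x. x \<le> a"] assms
  by (auto simp: ord_stat_def count_le_def filter_sort)

lemma ord_stat_less_iff: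
  assumes "1 \<le> j" "j \<le> length D"
  shows "ord_stat D j < a \<longleftrightarrow> j \<le> count_less D a"
  using sorted_nth_iff_less_length_filter[of "sort D" "j - 1" "\<lambda>x. x < a"] assms
  by (auto simp: ord_stat_def count_less_def filter_sort)

lemma ord_stat_mono:
  assumes "1 \<le> i" "i \<le> j" "j \<le> length D"
  shows "ord_stat D i \<le> ord_stat D j"
  unfolding ord_stat_def using assms by (intro sorted_nth_mono) auto

lemma ord_stat_in_set:
  assumes "1 \<le> j" "j \<le> length D"
  shows "ord_stat D j \<in> set D"
  unfolding ord_stat_def using assms
  by (metis Suc_le_eq Suc_pred' length_sort less_le_trans nth_mem set_sort zero_less_one)

lemma count_le_measurable[measurable]: "count_le D \<in> borel \<rightarrow>\<^sub>M count_space UNIV"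
proof (induction D)
  case Nil
  then show ?case by (simp add: count_le_def)
next
  case (Cons x D)
  have "count_le (x # D) = (\<lambda>y. if x \<le> y then Suc (count_le D y) else count_le D y)"
    by (auto simp: count_le_def)
  then show ?case using Cons by simp
qed

lemma count_less_measurable[measurable]: "count_less D \<in> borel \<rightarrow>\<^sub>M count_space UNIV"
proof (induction D)
  case Nil
  then show ?case by (simp add: count_less_def)
next
  case (Cons x D)
  have "count_less (x # D) = (\<lambda>y. if x < y then Suc (count_less D y) else count_less D y)"
    by (auto simp: count_less_def)
  then show ?case using Cons by simp
qed

lemma neighboring_sym:
  assumes "neighboring D D'"
  shows "neighboring D' D"
proof -
  let ?A = "mset D" and ?B = "mset D'"
  have "size (?A - ?B) = size ?A - size (?A \<inter># ?B)"
    by (metis diff_intersect_left_idem size_Diff_submset subset_mset.inf.cobounded1)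
  moreover have "size (?B - ?A) = size ?B - size (?A \<inter># ?B)"
    by (metis diff_intersect_right_idem size_Diff_submset subset_mset.inf.cobounded2)
  ultimately show ?thesis using assms unfolding neighboring_def by (simp flip: size_mset)
qed

lemma length_filter_neighboring_le:
  assumes "neighboring D D'"
  shows "length (filter P D) \<le> length (filter P D') + 1"
proof -
  let ?A = "mset D" and ?B = "mset D'"
  have "?A \<subseteq># ?B + (?A - ?B)"
    by (metis subset_eq_diff_conv subset_mset.eq_iff union_commute)
  then have "filter_mset P ?A \<subseteq># filter_mset P ?B + filter_mset P (?A - ?B)"
    using multiset_filter_mono[of ?A "?B + (?A - ?B)" P] by simp
  then have "size (filter_mset P ?A) \<le> size (filter_mset P ?B) + size (filter_mset P (?A - ?B))"
    using size_mset_mono by fastforce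
  also have "\<dots> \<le> size (filter_mset P ?B) + size (?A - ?B)"
    using size_filter_mset_lesseq by (rule add_left_mono)
  finally show ?thesis
    using assms unfolding neighboring_def by (simp flip: mset_filter size_mset)
qed

lemma idx_dist_le_iff: "idx_dist k i \<le> d \<longleftrightarrow> k \<le> i + d \<and> i \<le> k + d"
  unfolding idx_dist_def by auto

lemma median_bounds:
  assumes "length D > 0"
  shows "ord_stat D 1 \<le> median D" "median D \<le> ord_stat D (length D)"
proof -
  have "1 \<le> med_idx (length D)" "med_idx (length D) \<le> length D"
    using assms unfolding med_idx_def by linarith+
  then show "ord_stat D 1 \<le> median D" "median D \<le> ord_stat D (length D)"
    unfolding median_def by (metis ord_stat_mono order_refl)+
qed

lemma pct_loss_le_iff_exists_index:
  assumes "length D > 0"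
  shows "pct_loss D a \<le> d \<longleftrightarrow>
    (ord_stat D 1 \<le> a \<and> a \<le> median D \<and>
      (\<exists>i\<in>{1..length D}. ord_stat D i \<le> a \<and> idx_dist (med_idx (length D)) i \<le> d)) \<or>
    (median D < a \<and> a \<le> ord_stat D (length D) \<and>
      (\<exists>i\<in>{1..length D}. a \<le> ord_stat D i \<and> idx_dist (med_idx (length D)) i \<le> d)) \<or>
    (\<not> (ord_stat D 1 \<le> a \<and> a \<le> ord_stat D (length D)) \<and> med_idx (length D) \<le> d)"
proof -
  let ?n = "length D" and ?k = "med_idx (length D)"
  have "\<exists>i\<in>{1..?n}. a \<in> {ord_stat D i..median D}" if "ord_stat D 1 \<le> a" "a \<le> median D"
    using that assms by (intro bexI[of _ 1]) (auto simp: Suc_le_eq)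
  moreover have "\<exists>i\<in>{1..?n}. a \<in> {median D..ord_stat D i}" if "median D < a" "a \<le> ord_stat D ?n"
    using that assms by (intro bexI[of _ ?n]) (auto simp: Suc_le_eq)
  ultimately show ?thesis
    unfolding pct_loss_def Let_def
    using median_bounds[OF assms]
      Least_image_le_iff[of "{1..?n}" "\<lambda>i. a \<in> {ord_stat D i..median D}" "idx_dist ?k" d]
      Least_image_le_iff[of "{1..?n}" "\<lambda>i. a \<in> {median D..ord_stat D i}" "idx_dist ?k" d]
    by (auto simp: Suc_le_eq)
qed

lemma pct_loss_le_med_idx:
  assumes "length D > 0"
  shows "pct_loss D a \<le> med_idx (length D)"
proof -
  let ?n = "length D" and ?k = "med_idx (length D)"
  have "1 \<le> ?k" "?n \<le> ?k + ?k" "1 \<le> ?n"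
    using assms unfolding med_idx_def by linarith+
  then have "idx_dist ?k 1 \<le> ?k" "idx_dist ?k ?n \<le> ?k" "1 \<in> {1..?n}" "?n \<in> {1..?n}"
    unfolding idx_dist_le_iff by auto
  moreover consider "ord_stat D 1 \<le> a \<and> a \<le> median D" | "median D < a \<and> a \<le> ord_stat D ?n"
    | "\<not> (ord_stat D 1 \<le> a \<and> a \<le> ord_stat D ?n)"
    using median_bounds[OF assms] by linarith
  ultimately show ?thesis
    unfolding pct_loss_le_iff_exists_index[OF assms] by cases blast+
qed

lemma pct_loss_le_iff:
  assumes "odd (length D)" "d < med_idx (length D)"
  shows "pct_loss D a \<le> d \<longleftrightarrow>
    ord_stat D (med_idx (length D) - d) \<le> a \<and> a \<le> ord_stat D (med_idx (length D) + d)"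
proof -
  let ?n = "length D" and ?k = "med_idx (length D)" and ?x = "ord_stat D"
  let ?lo = "?k - d" and ?hi = "?k + d"
  have bounds: "1 \<le> ?lo" "?lo \<le> ?k" "?k \<le> ?hi" "?hi \<le> ?n"
    using assms by (auto simp: med_idx_def elim!: oddE)
  then have n: "0 < ?n" by linarith
  have mono: "?x i \<le> ?x j" if "1 \<le> i" "i \<le> j" "j \<le> ?n" for i j
    using ord_stat_mono that by blast
  have chain: "?x 1 \<le> ?x ?lo" "?x ?lo \<le> ?x ?k" "?x ?k \<le> ?x ?hi" "?x ?hi \<le> ?x ?n"
    using bounds by (auto intro!: mono)
  have lower: "(\<exists>i\<in>{1..?n}. ?x i \<le> a \<and> idx_dist ?k i \<le> d) \<longleftrightarrow> ?x ?lo \<le> a"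
  proof
    assume "\<exists>i\<in>{1..?n}. ?x i \<le> a \<and> idx_dist ?k i \<le> d"
    then obtain i where "i \<in> {1..?n}" "?x i \<le> a" "idx_dist ?k i \<le> d" by blast
    moreover from this have "?x ?lo \<le> ?x i" using bounds by (intro mono) (auto simp: idx_dist_le_iff)
    ultimately show "?x ?lo \<le> a" by linarith
  qed (use bounds in \<open>auto simp: idx_dist_le_iff intro!: bexI[of _ ?lo]\<close>)
  have upper: "(\<exists>i\<in>{1..?n}. a \<le> ?x i \<and> idx_dist ?k i \<le> d) \<longleftrightarrow> a \<le> ?x ?hi"
  proof
    assume "\<exists>i\<in>{1..?n}. a \<le> ?x i \<and> idx_dist ?k i \<le> d"
    then obtain i where "i \<in> {1..?n}" "a \<le> ?x i" "idx_dist ?k i \<le> d" by blast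
    moreover from this have "?x i \<le> ?x ?hi" using bounds by (intro mono) (auto simp: idx_dist_le_iff)
    ultimately show "a \<le> ?x ?hi" by linarith
  qed (use bounds in \<open>auto simp: idx_dist_le_iff intro!: bexI[of _ ?hi]\<close>)
  show ?thesis
    unfolding pct_loss_le_iff_exists_index[OF n] lower upper median_def
    using assms(2) chain by auto
qed

subsection \<open>The widened loss as a function of two counts\<close>

definition count_loss :: "real \<Rightarrow> real list \<Rightarrow> real \<Rightarrow> nat" where
  "count_loss r D l = (let k = med_idx (length D) in
     min k (max (k - count_le D (l + r)) (Suc (count_less D (l - r)) - k)))"

lemma count_loss_le_med_idx: "count_loss r D l \<le> med_idx (length D)"
  unfolding count_loss_def Let_def by simp

lemma count_loss_measurable[measurable]: "count_loss r D \<in> borel \<rightarrow>\<^sub>M count_space UNIV"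
  unfolding count_loss_def[abs_def] Let_def by measurable

lemma wide_loss_le_iff:
  assumes "odd (length D)" "set D \<subseteq> dom_V m" "l \<in> dom_V m" "0 \<le> \<alpha> * m"
  shows "wide_loss m \<alpha> D l \<le> d \<longleftrightarrow> med_idx (length D) \<le> d \<or>
    (med_idx (length D) \<le> count_le D (l + \<alpha> * m) + d \<and>
     count_less D (l - \<alpha> * m) < med_idx (length D) + d)"
proof -
  let ?n = "length D" and ?k = "med_idx (length D)" and ?x = "ord_stat D" and ?r = "\<alpha> * m"
  have n: "?n > 0" using assms(1) by (cases ?n) auto
  have "\<exists>a\<in>dom_V m. \<bar>a - l\<bar> \<le> ?r" using assms(3,4) by (intro bexI[of _ l]) auto
  then have "wide_loss m \<alpha> D l \<le> d \<longleftrightarrow> (\<exists>a\<in>dom_V m. \<bar>a - l\<bar> \<le> ?r \<and> pct_loss D a \<le> d)"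
    unfolding wide_loss_def by (rule Least_image_le_iff)
  also have "\<dots> \<longleftrightarrow> ?k \<le> d \<or> (?k \<le> count_le D (l + ?r) + d \<and> count_less D (l - ?r) < ?k + d)"
  proof (cases "?k \<le> d")
    case True
    then show ?thesis
      using pct_loss_le_med_idx[OF n, of l] assms(3,4) by (auto intro!: bexI[of _ l])
  next
    case False
    let ?lo = "?k - d" and ?hi = "?k + d"
    have bounds: "1 \<le> ?lo" "?lo \<le> ?hi" "?hi \<le> ?n"
      using False assms(1) by (auto simp: med_idx_def elim!: oddE)
    have in_V: "?x ?lo \<in> dom_V m" "?x ?hi \<in> dom_V m"
      using ord_stat_in_set[of ?lo D] ord_stat_in_set[of ?hi D] bounds assms(2) by auto
    have "(\<exists>a\<in>dom_V m. \<bar>a - l\<bar> \<le> ?r \<and> pct_loss D a \<le> d) \<longleftrightarrow>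
          (\<exists>a\<in>dom_V m. \<bar>a - l\<bar> \<le> ?r \<and> ?x ?lo \<le> a \<and> a \<le> ?x ?hi)"
      using pct_loss_le_iff[OF assms(1)] False by simp
    also have "\<dots> \<longleftrightarrow> ?x ?lo \<le> l + ?r \<and> l - ?r \<le> ?x ?hi"
    proof
      assume "?x ?lo \<le> l + ?r \<and> l - ?r \<le> ?x ?hi"
      moreover have "max (?x ?lo) (l - ?r) \<in> dom_V m"
        using in_V assms(3,4) by (auto simp: dom_V_def max_def)
      moreover have "?x ?lo \<le> ?x ?hi" using ord_stat_mono bounds by blast
      ultimately show "\<exists>a\<in>dom_V m. \<bar>a - l\<bar> \<le> ?r \<and> ?x ?lo \<le> a \<and> a \<le> ?x ?hi"
        using assms(4) by (intro bexI[of _ "max (?x ?lo) (l - ?r)"]) auto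
    qed auto
    also have "\<dots> \<longleftrightarrow> ?k \<le> count_le D (l + ?r) + d \<and> count_less D (l - ?r) < ?k + d"
      using ord_stat_le_iff[of ?lo D] ord_stat_less_iff[of ?hi D] bounds False
      by (simp add: not_less[symmetric]) linarith
    finally show ?thesis using False by simp
  qed
  finally show ?thesis .
qed

lemma wide_loss_eq_count_loss:
  assumes "odd (length D)" "set D \<subseteq> dom_V m" "l \<in> dom_V m" "0 \<le> \<alpha> * m"
  shows "wide_loss m \<alpha> D l = count_loss (\<alpha> * m) D l"
proof -
  have "wide_loss m \<alpha> D l \<le> d \<longleftrightarrow> count_loss (\<alpha> * m) D l \<le> d" for d
    unfolding wide_loss_le_iff[OF assms] count_loss_def Let_def by auto
  then show ?thesis by (metis le_antisym order_refl)
qed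

lemma wide_loss_neighboring_le:
  assumes "neighboring D D'" "odd (length D)" "set D \<subseteq> dom_V m" "set D' \<subseteq> dom_V m"
    "l \<in> dom_V m" "0 \<le> \<alpha> * m"
  shows "wide_loss m \<alpha> D' l \<le> wide_loss m \<alpha> D l + 1"
proof -
  have len: "length D' = length D" using assms(1) by (simp add: neighboring_def)
  have "count_le D (l + \<alpha> * m) \<le> count_le D' (l + \<alpha> * m) + 1"
    unfolding count_le_def by (rule length_filter_neighboring_le[OF assms(1)])
  moreover have "count_less D' (l - \<alpha> * m) \<le> count_less D (l - \<alpha> * m) + 1"
    unfolding count_less_def by (rule length_filter_neighboring_le[OF neighboring_sym[OF assms(1)]])
  ultimately show ?thesis
    using wide_loss_eq_count_loss[OF assms(2,3,5,6)] wide_loss_eq_count_loss[OF _ assms(4,5,6)] assms(2)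
    unfolding count_loss_def Let_def len by arith
qed

subsection \<open>The exponential mechanism\<close>

lemma expmed_weight_neighboring_le:
  assumes "neighboring D D'" "odd (length D)" "set D \<subseteq> dom_V m" "set D' \<subseteq> dom_V m"
    "l \<in> dom_V m" "0 \<le> \<alpha> * m" "0 \<le> \<epsilon>"
  shows "expmed_weight \<epsilon> m \<alpha> D l \<le> exp (\<epsilon> / 2) * expmed_weight \<epsilon> m \<alpha> D' l"
proof -
  have "real (wide_loss m \<alpha> D' l) \<le> real (wide_loss m \<alpha> D l) + 1"
    using wide_loss_neighboring_le[OF assms(1-6)] by linarith
  then have "\<epsilon> / 2 * real (wide_loss m \<alpha> D' l) \<le> \<epsilon> / 2 * (real (wide_loss m \<alpha> D l) + 1)"
    using assms(7) by (intro mult_left_mono) auto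
  then have "- (\<epsilon> / 2) * real (wide_loss m \<alpha> D l) \<le> \<epsilon> / 2 + - (\<epsilon> / 2) * real (wide_loss m \<alpha> D' l)"
    by (simp add: algebra_simps)
  then show ?thesis
    unfolding expmed_weight_def by (simp flip: exp_add)
qed

lemma expmed_weight_set_integrable:
  assumes "odd (length D)" "set D \<subseteq> dom_V m" "0 \<le> \<alpha> * m" "0 \<le> \<epsilon>"
    "A \<in> sets lborel" "A \<subseteq> dom_V m"
  shows "set_integrable lborel A (expmed_weight \<epsilon> m \<alpha> D)"
proof -
  define g where "g l = exp (- (\<epsilon> / 2) * real (count_loss (\<alpha> * m) D l))" for l
  have "set_integrable lborel (dom_V m) g"
    unfolding set_integrable_def
  proof (rule integrableI_bounded_set_indicator[where B = 1])
    show "AE x in lborel. x \<in> dom_V m \<longrightarrow> norm (g x) \<le> 1"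
      using assms(4) by (auto simp: g_def)
  qed (auto simp: g_def dom_V_def emeasure_lborel_Icc_eq)
  also have "set_integrable lborel (dom_V m) g \<longleftrightarrow>
             set_integrable lborel (dom_V m) (expmed_weight \<epsilon> m \<alpha> D)"
    by (rule set_integrable_cong)
       (simp_all add: g_def expmed_weight_def wide_loss_eq_count_loss[OF assms(1,2) _ assms(3)])
  finally show ?thesis using set_integrable_subset assms(5,6) by blast
qed

lemma expmed_weight_integral_pos:
  assumes "odd (length D)" "set D \<subseteq> dom_V m" "0 \<le> \<alpha> * m" "0 \<le> \<epsilon>" "0 < m"
  shows "0 < (LINT l:dom_V m|lborel. expmed_weight \<epsilon> m \<alpha> D l)"
proof -
  let ?b = "exp (- (\<epsilon> / 2) * real (med_idx (length D)))"
  have V: "dom_V m \<in> sets lborel" "emeasure lborel (dom_V m) < \<infinity>"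
    "measure lborel (dom_V m) = m"
    using assms(5) by (auto simp: dom_V_def)
  have "?b \<le> expmed_weight \<epsilon> m \<alpha> D l" if "l \<in> dom_V m" for l
    using assms(4) count_loss_le_med_idx[of "\<alpha> * m" D l]
    by (simp add: expmed_weight_def wide_loss_eq_count_loss[OF assms(1,2) that assms(3)] mult_left_mono)
  then have "(LINT l:dom_V m|lborel. ?b) \<le> (LINT l:dom_V m|lborel. expmed_weight \<epsilon> m \<alpha> D l)"
    using expmed_weight_set_integrable[OF assms(1-4) V(1) order_refl] V
    by (intro set_integral_mono) (auto simp: set_integrable_def)
  moreover have "(LINT l:dom_V m|lborel. ?b) = m * ?b"
    using V by (simp add: set_integral_const)
  moreover have "0 < m * ?b" using assms(5) by simp
  ultimately show ?thesis by linarith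
qed

lemma set_integral_ratio_le:
  fixes f g :: "'a \<Rightarrow> real"
  assumes "A \<in> sets M" "B \<in> sets M" "B \<subseteq> A"
    and "set_integrable M A f" "set_integrable M A g"
    and "\<And>x. x \<in> A \<Longrightarrow> f x \<le> c * g x" "\<And>x. x \<in> A \<Longrightarrow> g x \<le> c * f x"
    and "\<And>x. x \<in> A \<Longrightarrow> 0 \<le> g x" "0 \<le> c"
    and "0 < (LINT x:A|M. f x)" "0 < (LINT x:A|M. g x)"
  shows "(LINT x:B|M. f x) / (LINT x:A|M. f x) \<le> c * c * ((LINT x:B|M. g x) / (LINT x:A|M. g x))"
proof -
  let ?NF = "LINT x:B|M. f x" and ?ZF = "LINT x:A|M. f x"
    and ?NG = "LINT x:B|M. g x" and ?ZG = "LINT x:A|M. g x"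
  have int_B: "set_integrable M B f" "set_integrable M B g"
    using assms(2-5) set_integrable_subset by blast+
  have num: "?NF \<le> c * ?NG"
    using assms(3,6) int_B by (simp flip: set_integral_mult_right add: set_integral_mono subsetD)
  have den: "?ZG \<le> c * ?ZF"
    using assms(4,5,7) by (simp flip: set_integral_mult_right add: set_integral_mono)
  have "0 \<le> ?NG"
    using assms(3,8) unfolding set_lebesgue_integral_def
    by (intro integral_nonneg_AE) (auto simp: indicator_def)
  have "?NF / ?ZF \<le> c * ?NG * (1 / ?ZF)"
    using num assms(10) by (simp add: divide_right_mono)
  also have "\<dots> \<le> c * ?NG * (c / ?ZG)"
    using den assms(9-11) \<open>0 \<le> ?NG\<close> by (intro mult_left_mono) (simp_all add: field_simps)
  also have "\<dots> = c * c * (?NG / ?ZG)" by simp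
  finally show ?thesis .
qed

theorem lemma7p6:
  fixes m \<epsilon> \<alpha> :: real and n :: nat
  assumes "m > 0" and "odd n" and "n > 0" and "\<epsilon> > 0" and "\<alpha> \<in> {0..1}"
  shows "\<forall>D D' S. length D = n \<longrightarrow> set D \<subseteq> dom_V m \<longrightarrow>
           length D' = n \<longrightarrow> set D' \<subseteq> dom_V m \<longrightarrow> neighboring D D' \<longrightarrow>
           S \<in> sets borel \<longrightarrow> S \<subseteq> dom_V m \<longrightarrow>
           expmed_prob \<epsilon> m \<alpha> D S \<le> exp \<epsilon> * expmed_prob \<epsilon> m \<alpha> D' S"
proof (intro allI impI)
  fix D D' :: "real list" and S :: "real set"
  assume D: "length D = n" "set D \<subseteq> dom_V m" and D': "length D' = n" "set D' \<subseteq> dom_V m"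
    and nb: "neighboring D D'" and "S \<in> sets borel" "S \<subseteq> dom_V m"
  have "0 \<le> \<alpha> * m" "0 \<le> \<epsilon>" using assms by auto
  moreover have "odd (length D)" "odd (length D')" using D D' assms(2) by auto
  moreover have "dom_V m \<in> sets lborel" "S \<inter> dom_V m \<in> sets lborel"
    using \<open>S \<in> sets borel\<close> by (auto simp: dom_V_def)
  ultimately have "expmed_prob \<epsilon> m \<alpha> D S \<le> exp (\<epsilon> / 2) * exp (\<epsilon> / 2) * expmed_prob \<epsilon> m \<alpha> D' S"
    unfolding expmed_prob_def using D D' nb assms(1)
    by (intro set_integral_ratio_le expmed_weight_set_integrable expmed_weight_integral_pos
        expmed_weight_neighboring_le[OF nb] expmed_weight_neighboring_le[OF neighboring_sym[OF nb]])
      (auto simp: expmed_weight_def)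
  then show "expmed_prob \<epsilon> m \<alpha> D S \<le> exp \<epsilon> * expmed_prob \<epsilon> m \<alpha> D' S"
    by (simp flip: exp_add)
qed

end
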